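(* Let $\mathbb Z^\infty=\bigoplus_{\mathbb N}\mathbb Z$ and, for a weight function $w:\mathbb N\to\mathbb R_{>0}$, let $d_w(x,y)=\sum_{j\ge0}w(j)|x_j-y_j|$. Then $(\mathbb Z^\infty,d_{w_1})$ with $w_1(n)=n+1$ and $(\mathbb Z^\infty,d_{w_2})$ with $w_2(n)=1$ are not coarsely equivalent: there are no coarse maps $f:(\mathbb Z^\infty,d_{w_1})\to(\mathbb Z^\infty,d_{w_2})$ and $g:(\mathbb Z^\infty,d_{w_2})\to(\mathbb Z^\infty,d_{w_1})$ such that $g\circ f$ is close to the identity of $\mathbb Z^\infty$ and $f\circ g$ is close to the identity of $\mathbb Z^\infty$.
   Context: $\mathbb Z^\infty$ is the set of integer sequences $(x_0,x_1,\dots)$ with only finitely many nonzero entries. A map $f:(X,d_X)\to(Y,d_Y)$ between metric spaces is coarse if it is uniformly expansive (for every $R>0$ there is $S>0$ with $d_Y(fx,fx')\le S$ whenever $d_X(x,x')\le R$) and metrically proper (preimages of bounded sets are bounded). Two maps $f,f':X\to Y$ are close if $\sup_{x}d_Y(fx,f'x)<\infty$. *)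

theory Defs
  imports "HOL-Analysis.Analysis"
begin

definition Zinf :: "(nat \<Rightarrow> int) set" where
  "Zinf = {x. finite {j. x j \<noteq> 0}}"

definition dw :: "(nat \<Rightarrow> real) \<Rightarrow> (nat \<Rightarrow> int) \<Rightarrow> (nat \<Rightarrow> int) \<Rightarrow> real" where
  "dw w x y = (\<Sum>j\<in>{j. x j \<noteq> y j}. w j * real_of_int \<bar>x j - y j\<bar>)"

definition mbounded :: "'a set \<Rightarrow> ('a \<Rightarrow> 'a \<Rightarrow> real) \<Rightarrow> 'a set \<Rightarrow> bool" where
  "mbounded X d B \<longleftrightarrow> B \<subseteq> X \<and> (\<exists>c\<in>X. \<exists>r. \<forall>y\<in>B. d c y \<le> r)"

definition coarse_map ::
  "'a set \<Rightarrow> ('a \<Rightarrow> 'a \<Rightarrow> real) \<Rightarrow> 'b set \<Rightarrow> ('b \<Rightarrow> 'b \<Rightarrow> real) \<Rightarrow> ('a \<Rightarrow> 'b) \<Rightarrow> bool" where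
  "coarse_map X dX Y dY f \<longleftrightarrow>
     (\<forall>x\<in>X. f x \<in> Y) \<and>
     (\<forall>R>0. \<exists>S>0. \<forall>x\<in>X. \<forall>x'\<in>X. dX x x' \<le> R \<longrightarrow> dY (f x) (f x') \<le> S) \<and>
     (\<forall>B. mbounded Y dY B \<longrightarrow> mbounded X dX {x\<in>X. f x \<in> B})"

definition close_maps :: "'a set \<Rightarrow> ('b \<Rightarrow> 'b \<Rightarrow> real) \<Rightarrow> ('a \<Rightarrow> 'b) \<Rightarrow> ('a \<Rightarrow> 'b) \<Rightarrow> bool" where
  "close_maps X dY f g \<longleftrightarrow> (\<exists>C. \<forall>x\<in>X. dY (f x) (g x) \<le> C)"

end

theory Submission
  imports Defs
begin

text \<open>
  Under the weight \<open>n + 1\<close> every ball is finite: a point at distance at most \<open>S\<close> from \<open>c\<close>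
  agrees with \<open>c\<close> beyond coordinate \<open>S\<close> and differs from it by at most \<open>S\<close> elsewhere.
  Under the constant weight, on the other hand, the points \<open>n e\<^sub>j\<close> form an infinite family
  inside the ball of radius \<open>n\<close> around \<open>0\<close> with pairwise distances \<open>2n\<close>.  A coarse map \<open>g\<close>
  from the constant-weight space sends this family into a ball of the other space, so it
  identifies two of its points; if \<open>f \<circ> g\<close> were within \<open>C < n\<close> of the identity,
  those two points would be at distance at most \<open>2C < 2n\<close>.
\<close>

lemma Zinf_diff_finite:
  assumes "x \<in> Zinf" "y \<in> Zinf"
  shows "finite {j. x j \<noteq> y j}"
proof -
  have "{j. x j \<noteq> y j} \<subseteq> {j. x j \<noteq> 0} \<union> {j. y j \<noteq> 0}" by auto
  then show ?thesis using assms unfolding Zinf_def by (auto intro: finite_subset)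
qed

lemma dw_eq_sum_superset:
  assumes "finite S" "{j. x j \<noteq> y j} \<subseteq> S"
  shows "dw w x y = (\<Sum>j\<in>S. w j * real_of_int \<bar>x j - y j\<bar>)"
  unfolding dw_def by (rule sum.mono_neutral_left) (use assms in auto)

lemma dw_sym: "dw w x y = dw w y x"
  unfolding dw_def by (simp add: abs_minus_commute eq_commute)

lemma dw_nonneg:
  assumes "\<And>j. w j \<ge> 0"
  shows "0 \<le> dw w x y"
  unfolding dw_def using assms by (auto intro!: sum_nonneg)

lemma dw_triangle:
  assumes "x \<in> Zinf" "y \<in> Zinf" "z \<in> Zinf" and w: "\<And>j. w j \<ge> 0"
  shows "dw w x z \<le> dw w x y + dw w y z"
proof -
  define S where "S = {j. x j \<noteq> y j} \<union> {j. y j \<noteq> z j} \<union> {j. x j \<noteq> z j}"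
  have fin: "finite S" unfolding S_def using Zinf_diff_finite assms by auto
  have "dw w x z = (\<Sum>j\<in>S. w j * real_of_int \<bar>x j - z j\<bar>)"
    by (rule dw_eq_sum_superset[OF fin]) (auto simp: S_def)
  also have "\<dots> \<le> (\<Sum>j\<in>S. w j * real_of_int \<bar>x j - y j\<bar> + w j * real_of_int \<bar>y j - z j\<bar>)"
  proof (rule sum_mono)
    fix j
    have "real_of_int \<bar>x j - z j\<bar> \<le> real_of_int \<bar>x j - y j\<bar> + real_of_int \<bar>y j - z j\<bar>"
      by linarith
    then have "w j * real_of_int \<bar>x j - z j\<bar>
               \<le> w j * (real_of_int \<bar>x j - y j\<bar> + real_of_int \<bar>y j - z j\<bar>)"
      by (rule mult_left_mono) (rule w)
    then show "w j * real_of_int \<bar>x j - z j\<bar>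
               \<le> w j * real_of_int \<bar>x j - y j\<bar> + w j * real_of_int \<bar>y j - z j\<bar>"
      by (simp only: distrib_left)
  qed
  also have "\<dots> = dw w x y + dw w y z"
    by (simp add: sum.distrib dw_eq_sum_superset[OF fin] S_def subset_iff)
  finally show ?thesis .
qed

lemma dw_coordinate_le:
  assumes "x \<in> Zinf" "y \<in> Zinf" and w: "\<And>j. w j \<ge> 0"
  shows "w j * real_of_int \<bar>x j - y j\<bar> \<le> dw w x y"
proof (cases "x j = y j")
  case True
  then show ?thesis using dw_nonneg[OF w] by simp
next
  case False
  then show ?thesis unfolding dw_def
    by (intro member_le_sum) (use Zinf_diff_finite[OF assms(1,2)] w in auto)
qed

lemma finite_dw_ball:
  assumes c: "c \<in> Zinf" and w_ge_1: "\<And>j. w j \<ge> 1"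
    and w_unbounded: "filterlim w at_top sequentially"
  shows "finite {y \<in> Zinf. dw w c y \<le> S}"
proof -
  let ?B = "{y \<in> Zinf. dw w c y \<le> S}"
  obtain N where N: "\<And>j. N \<le> j \<Longrightarrow> w j > S"
    using filterlim_at_top_dense[THEN iffD1, OF w_unbounded, rule_format, of S]
    by (auto simp: eventually_sequentially)
  define M where "M = \<lceil>S\<rceil>"
  define extend :: "(nat \<Rightarrow> int) \<Rightarrow> nat \<Rightarrow> int" where
    "extend u = (\<lambda>j. if j < N then u j else c j)" for u
  have "?B \<subseteq> extend ` PiE {..<N} (\<lambda>j. {c j - M .. c j + M})"
  proof
    fix y assume "y \<in> ?B"
    then have y: "y \<in> Zinf" "dw w c y \<le> S" by auto
    have "w j * real_of_int \<bar>c j - y j\<bar> \<le> dw w c y" for j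
      by (rule dw_coordinate_le[OF c y(1)]) (meson w_ge_1 order_trans zero_le_one)
    then have coord: "w j * real_of_int \<bar>c j - y j\<bar> \<le> S" for j
      using y(2) by (rule order_trans)
    have far: "y j = c j" if "N \<le> j" for j
    proof (rule ccontr)
      assume "y j \<noteq> c j"
      then have "w j \<le> w j * real_of_int \<bar>c j - y j\<bar>"
        using w_ge_1[of j] by (simp add: mult_le_cancel_left1)
      then show False using coord[of j] N[OF that] by linarith
    qed
    have near: "y j \<in> {c j - M .. c j + M}" for j
    proof -
      have "real_of_int \<bar>c j - y j\<bar> \<le> w j * real_of_int \<bar>c j - y j\<bar>"
        using w_ge_1[of j] by (simp add: mult_le_cancel_right1)
      then have "real_of_int \<bar>c j - y j\<bar> \<le> S" using coord[of j] by linarith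
      then show ?thesis unfolding M_def by (simp add: abs_le_iff) linarith
    qed
    have "y = extend (restrict y {..<N})"
      using far by (auto simp: extend_def not_less)
    moreover have "restrict y {..<N} \<in> PiE {..<N} (\<lambda>j. {c j - M .. c j + M})"
      using near by (simp add: restrict_PiE_iff)
    ultimately show "y \<in> extend ` PiE {..<N} (\<lambda>j. {c j - M .. c j + M})" by (rule image_eqI)
  qed
  moreover have "finite (extend ` PiE {..<N} (\<lambda>j. {c j - M .. c j + M}))"
    by (intro finite_imageI finite_PiE) auto
  ultimately show ?thesis by (rule finite_subset)
qed

definition scaled_unit :: "int \<Rightarrow> nat \<Rightarrow> nat \<Rightarrow> int" where
  "scaled_unit n j = (\<lambda>i. if i = j then n else 0)"

lemma scaled_unit_in_Zinf: "scaled_unit n j \<in> Zinf"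
proof -
  have "{i. scaled_unit n j i \<noteq> 0} \<subseteq> {j}" unfolding scaled_unit_def by auto
  then show ?thesis unfolding Zinf_def by (auto intro: finite_subset)
qed

lemma dw_zero_scaled_unit: "dw w (\<lambda>_. 0) (scaled_unit n j) = w j * real_of_int \<bar>n\<bar>"
proof (cases "n = 0")
  case False
  then have "{i. 0 \<noteq> scaled_unit n j i} = {j}" unfolding scaled_unit_def by auto
  then show ?thesis unfolding dw_def scaled_unit_def by simp
qed (simp add: dw_def scaled_unit_def)

lemma dw_scaled_units:
  assumes "j \<noteq> k"
  shows "dw w (scaled_unit n j) (scaled_unit n k) = (w j + w k) * real_of_int \<bar>n\<bar>"
proof (cases "n = 0")
  case False
  then have "{i. scaled_unit n j i \<noteq> scaled_unit n k i} = {j, k}"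
    unfolding scaled_unit_def using assms by auto
  then show ?thesis unfolding dw_def scaled_unit_def using assms by (simp add: algebra_simps)
qed (simp add: dw_def scaled_unit_def)

lemma expansive_map_collapses_scaled_units:
  assumes g_into: "\<And>x. x \<in> Zinf \<Longrightarrow> g x \<in> Zinf"
    and g_expansive: "\<And>x x'. x \<in> Zinf \<Longrightarrow> x' \<in> Zinf \<Longrightarrow> dw (\<lambda>_. 1) x x' \<le> real_of_int \<bar>n\<bar>
                       \<Longrightarrow> dw w (g x) (g x') \<le> S"
    and "\<And>j. w j \<ge> 1" "filterlim w at_top sequentially"
  obtains j k where "j \<noteq> k" "g (scaled_unit n j) = g (scaled_unit n k)"
proof -
  have zero_in: "(\<lambda>_. 0) \<in> Zinf" unfolding Zinf_def by simp
  have "range (\<lambda>j. g (scaled_unit n j)) \<subseteq> {y \<in> Zinf. dw w (g (\<lambda>_. 0)) y \<le> S}"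
    using g_expansive[OF zero_in scaled_unit_in_Zinf] g_into scaled_unit_in_Zinf
    by (auto simp: dw_zero_scaled_unit)
  then have "finite (range (\<lambda>j. g (scaled_unit n j)))"
    by (rule finite_subset) (rule finite_dw_ball[OF g_into[OF zero_in] assms(3,4)])
  then have "\<not> inj (\<lambda>j. g (scaled_unit n j))"
    using finite_imageD infinite_UNIV_nat by blast
  then show ?thesis using that unfolding inj_def by blast
qed

theorem proposition7p3p4:
  shows "\<not> (\<exists>f g.
            coarse_map Zinf (dw (\<lambda>n. real n + 1)) Zinf (dw (\<lambda>n. 1)) f \<and>
            coarse_map Zinf (dw (\<lambda>n. 1)) Zinf (dw (\<lambda>n. real n + 1)) g \<and>
            close_maps Zinf (dw (\<lambda>n. real n + 1)) (g \<circ> f) id \<and>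
            close_maps Zinf (dw (\<lambda>n. 1)) (f \<circ> g) id)"
proof clarify
  fix f g
  assume cf: "coarse_map Zinf (dw (\<lambda>n. real n + 1)) Zinf (dw (\<lambda>n. 1)) f"
    and cg: "coarse_map Zinf (dw (\<lambda>n. 1)) Zinf (dw (\<lambda>n. real n + 1)) g"
    and "close_maps Zinf (dw (\<lambda>n. 1)) (f \<circ> g) id"
  then obtain C where C: "\<And>x. x \<in> Zinf \<Longrightarrow> dw (\<lambda>_. 1) (f (g x)) x \<le> C"
    unfolding close_maps_def by auto
  define n :: int where "n = \<lceil>max C 0\<rceil> + 1"
  have n_pos: "n > 0" and C_less_n: "C < n" unfolding n_def by linarith+
  have "real_of_int \<bar>n\<bar> > 0" using n_pos by simp
  then obtain S where g_expansive:
      "\<And>x x'. x \<in> Zinf \<Longrightarrow> x' \<in> Zinf \<Longrightarrow> dw (\<lambda>_. 1) x x' \<le> real_of_int \<bar>n\<bar>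
               \<Longrightarrow> dw (\<lambda>n. real n + 1) (g x) (g x') \<le> S"
    using cg unfolding coarse_map_def by blast
  have g_into: "\<And>x. x \<in> Zinf \<Longrightarrow> g x \<in> Zinf"
    using cg unfolding coarse_map_def by blast
  have w_ge_1: "\<And>j. real j + 1 \<ge> (1 :: real)" by simp
  have w_unbounded: "filterlim (\<lambda>n. real n + 1) at_top sequentially"
    using filterlim_tendsto_add_at_top[OF tendsto_const filterlim_real_sequentially, of 1]
    by (simp add: add.commute)
  obtain j k where jk: "j \<noteq> k" "g (scaled_unit n j) = g (scaled_unit n k)"
    by (rule expansive_map_collapses_scaled_units[OF g_into g_expansive w_ge_1 w_unbounded])
  have f_into: "\<And>x. x \<in> Zinf \<Longrightarrow> f x \<in> Zinf"
    using cf unfolding coarse_map_def by blast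
  let ?y = "f (g (scaled_unit n j))"
  have "2 * real_of_int n = dw (\<lambda>_. 1) (scaled_unit n j) (scaled_unit n k)"
    using dw_scaled_units[OF jk(1)] n_pos by simp
  also have "\<dots> \<le> dw (\<lambda>_. 1) (scaled_unit n j) ?y + dw (\<lambda>_. 1) ?y (scaled_unit n k)"
    by (intro dw_triangle f_into g_into scaled_unit_in_Zinf) simp
  also have "\<dots> \<le> 2 * C"
    using C[OF scaled_unit_in_Zinf, of n j] C[OF scaled_unit_in_Zinf, of n k] jk(2)
    by (simp add: dw_sym[of _ "scaled_unit n j"])
  finally show False using C_less_n by simp
qed

end
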